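(* Suppose all edge probabilities $p_{ij}$ and the community size $r$ are known, and that at least one of Assumption 1.1 and Assumption 1.2 holds. Fix $\epsilon>0$ and consider the scan test that rejects (outputs $1$) if and only if $\max_{D\subseteq V,\,1\le|D|\le r}T^{\mathsf k}_D\ge1+\epsilon/2$. This test is asymptotically powerful if for all $C\subseteq V$ with $|C|=r$, \[ \max_{\emptyset\ne D\subseteq C}\frac{\mathbb{E}_0[e(D)]\,h(\rho_C-1)}{|D|\log(n/|D|)}\ge1+\epsilon . \]
   Context: Setting. For each $n$ let $V=\{1,\dots,n\}$, let $p_{ij}=p_{ji}\in[0,1]$ ($i\ne j$) be edge probabilities, let $r=r_n$ be a community size, and for each $C\subseteq V$ with $|C|=r$ let $\rho_C>1$ with $\rho_Cp_{ij}\le1$ for $i,j\in C$. All may depend on $n$, and limits are as $n\to\infty$. Observe a simple undirected graph with adjacency matrix $A$. Under $\mathbb{P}_0$ the $A_{ij}$ ($i<j$) are independent $\mathrm{Bern}(p_{ij})$. Under $\mathbb{P}_C$ they are independent with $A_{ij}\sim\mathrm{Bern}(\rho_Cp_{ij})$ for $i,j\in C$ and $\mathrm{Bern}(p_{ij})$ otherwise. $\mathbb{E}_0,\mathbb{E}_C$ are the corresponding expectations. The worst-case risk of a test $\psi_n$ is $R_n(\psi_n)=\mathbb{P}_0(\psi_n\ne0)+\max_{|C|=r}\mathbb{P}_C(\psi_n\ne1)$, and the test is asymptotically powerful if $R_n\to0$. Notation. $e(D)=\sum_{i<j,\ i,j\in D}A_{ij}$. $h(x)=(x+1)\log(x+1)-x$.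 $[x]_+=\max\{x,0\}$. $T^{\mathsf k}_D=\mathbb{E}_0[e(D)]\,h([e(D)/\mathbb{E}_0[e(D)]-1]_+)/(|D|\log(n/|D|))$, with $T^{\mathsf k}_D=0$ when $\mathbb{E}_0[e(D)]=0$. For $|D|\ge2$, $\bar p_D=\mathbb{E}_0[e(D)]/\binom{|D|}{2}$. Assumption 1.1. There exists $\delta\in(0,1/2)$ with: (i) $r=O(n^{1/2-\delta})$; (ii) there exists $0<\gamma_n=o(1)$ such that $\max_{|C|=r}\max_{D\subseteq C,\,|D|<r/(n/r)^{\gamma_n}}\frac{|D|\bar p_D}{|C|\bar p_C}\le\delta$; (iii) $\max_{|C|=r}1/\bar p_C=o(r/\log(n/r))$. Assumption 1.2. (i) $r=n^{o(1)}$; (ii) $\max_{|C|=r}\log(1/\bar p_C)=o(\log(n/r)/\log r)$. *)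

theory Defs
  imports Complex_Main "HOL-Library.Landau_Symbols"
begin

text \<open>Vertex set V = {1..n}. A graph is represented by its edge set, a subset of
  the unordered pairs written as (i,j) with 1 <= i < j <= n.\<close>

definition pairs :: "nat \<Rightarrow> (nat \<times> nat) set" where
  "pairs n = {(i,j). 1 \<le> i \<and> i < j \<and> j \<le> n}"

text \<open>Probability of the event S when the A_ij (i<j) are independent Bernoulli(q(i,j)).\<close>
definition graph_prob :: "nat \<Rightarrow> (nat \<times> nat \<Rightarrow> real) \<Rightarrow> ((nat \<times> nat) set \<Rightarrow> bool) \<Rightarrow> real" where
  "graph_prob n q S =
     (\<Sum>G\<in>Pow (pairs n). if S G then (\<Prod>e\<in>pairs n. if e \<in> G then q e else 1 - q e) else 0)"

definition null_q :: "(nat \<Rightarrow> nat \<Rightarrow> nat \<Rightarrow> real) \<Rightarrow> nat \<Rightarrow> nat \<times> nat \<Rightarrow> real" where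
  "null_q p n = (\<lambda>(i,j). p n i j)"

definition alt_q :: "(nat \<Rightarrow> nat \<Rightarrow> nat \<Rightarrow> real) \<Rightarrow> (nat \<Rightarrow> nat set \<Rightarrow> real) \<Rightarrow> nat \<Rightarrow> nat set
    \<Rightarrow> nat \<times> nat \<Rightarrow> real" where
  "alt_q p \<rho> n C = (\<lambda>(i,j). if i \<in> C \<and> j \<in> C then \<rho> n C * p n i j else p n i j)"

definition edges_in :: "(nat \<times> nat) set \<Rightarrow> nat set \<Rightarrow> nat" where
  "edges_in G D = card {(i,j). (i,j) \<in> G \<and> i \<in> D \<and> j \<in> D}"

definition mean_edges :: "(nat \<Rightarrow> nat \<Rightarrow> nat \<Rightarrow> real) \<Rightarrow> nat \<Rightarrow> nat set \<Rightarrow> real" where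
  "mean_edges p n D = (\<Sum>(i,j)\<in>{(i,j). (i,j) \<in> pairs n \<and> i \<in> D \<and> j \<in> D}. p n i j)"

definition pbar :: "(nat \<Rightarrow> nat \<Rightarrow> nat \<Rightarrow> real) \<Rightarrow> nat \<Rightarrow> nat set \<Rightarrow> real" where
  "pbar p n D = mean_edges p n D / real (card D choose 2)"

definition hfun :: "real \<Rightarrow> real" where
  "hfun x = (x + 1) * ln (x + 1) - x"

definition Tk :: "(nat \<Rightarrow> nat \<Rightarrow> nat \<Rightarrow> real) \<Rightarrow> nat \<Rightarrow> nat set \<Rightarrow> (nat \<times> nat) set \<Rightarrow> real" where
  "Tk p n D G = (let \<mu> = mean_edges p n D in
     if \<mu> = 0 then 0
     else \<mu> * hfun (max (real (edges_in G D) / \<mu> - 1) 0) / (real (card D) * ln (real n / real (card D))))"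

definition scan_test :: "(nat \<Rightarrow> nat \<Rightarrow> nat \<Rightarrow> real) \<Rightarrow> (nat \<Rightarrow> nat) \<Rightarrow> real \<Rightarrow> nat
    \<Rightarrow> (nat \<times> nat) set \<Rightarrow> bool" where
  "scan_test p r \<epsilon> n G =
     (\<exists>D. D \<subseteq> {1..n} \<and> 1 \<le> card D \<and> card D \<le> r n \<and> Tk p n D G \<ge> 1 + \<epsilon> / 2)"

definition risk :: "(nat \<Rightarrow> nat \<Rightarrow> nat \<Rightarrow> real) \<Rightarrow> (nat \<Rightarrow> nat set \<Rightarrow> real) \<Rightarrow> (nat \<Rightarrow> nat)
    \<Rightarrow> (nat \<Rightarrow> (nat \<times> nat) set \<Rightarrow> bool) \<Rightarrow> nat \<Rightarrow> real" where
  "risk p \<rho> r \<psi> n =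
     graph_prob n (null_q p n) (\<lambda>G. \<psi> n G) +
     Max {graph_prob n (alt_q p \<rho> n C) (\<lambda>G. \<not> \<psi> n G) | C. C \<subseteq> {1..n} \<and> card C = r n}"

definition asymp_powerful :: "(nat \<Rightarrow> nat \<Rightarrow> nat \<Rightarrow> real) \<Rightarrow> (nat \<Rightarrow> nat set \<Rightarrow> real) \<Rightarrow> (nat \<Rightarrow> nat)
    \<Rightarrow> (nat \<Rightarrow> (nat \<times> nat) set \<Rightarrow> bool) \<Rightarrow> bool" where
  "asymp_powerful p \<rho> r \<psi> \<longleftrightarrow> (risk p \<rho> r \<psi> \<longlonglongrightarrow> 0)"

definition assumption_1_1 :: "(nat \<Rightarrow> nat \<Rightarrow> nat \<Rightarrow> real) \<Rightarrow> (nat \<Rightarrow> nat) \<Rightarrow> bool" where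
  "assumption_1_1 p r \<longleftrightarrow> (\<exists>\<delta>::real. 0 < \<delta> \<and> \<delta> < 1/2 \<and>
     (\<lambda>n. real (r n)) \<in> O(\<lambda>n. real n powr (1/2 - \<delta>)) \<and>
     (\<exists>\<gamma>::nat \<Rightarrow> real. (\<forall>n. 0 < \<gamma> n) \<and> \<gamma> \<longlonglongrightarrow> 0 \<and>
        (\<forall>n C D. C \<subseteq> {1..n} \<and> card C = r n \<and> D \<subseteq> C \<and>
            real (card D) < real (r n) / (real n / real (r n)) powr \<gamma> n \<longrightarrow>
            real (card D) * pbar p n D / (real (card C) * pbar p n C) \<le> \<delta>)) \<and>
     (\<forall>c>0. \<forall>\<^sub>F n in sequentially. \<forall>C. C \<subseteq> {1..n} \<and> card C = r n \<longrightarrow>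
        0 < pbar p n C \<and> ln (real n / real (r n)) \<le> c * real (r n) * pbar p n C))"

definition assumption_1_2 :: "(nat \<Rightarrow> nat \<Rightarrow> nat \<Rightarrow> real) \<Rightarrow> (nat \<Rightarrow> nat) \<Rightarrow> bool" where
  "assumption_1_2 p r \<longleftrightarrow>
     (\<lambda>n. ln (real (r n)) / ln (real n)) \<longlonglongrightarrow> 0 \<and>
     (\<forall>c>0. \<forall>\<^sub>F n in sequentially. \<forall>C. C \<subseteq> {1..n} \<and> card C = r n \<longrightarrow>
        0 < pbar p n C \<and>
        ln (1 / pbar p n C) * ln (real (r n)) \<le> c * ln (real n / real (r n)))"

end

theory Submission
  imports Defs
begin

(*
  Under P_0 the event T^k_D >= t is an upper-tail event for e(D); the Chernoff bound with tilt
  ln (1 + x), where E_0 e(D) h(x) = t |D| log(n/|D|), bounds its probability by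
  exp(-t |D| log(n/|D|)). For t = 1 + eps/2 a union bound over the at most (e n/k)^k sets of
  size k leaves a geometric series in exp(1 - (eps/2) log(n/r)), which tends to 0 because both
  assumptions force log(n/r) to infinity.

  Under P_C let D be a subset of C carrying the signal. Not rejecting forces e(D) below
  (1 + x) E_0 e(D) with h(x) = (1 + eps/2)/(1 + eps) h(rho - 1), whereas E_C e(D) = rho E_0 e(D);
  the Chernoff lower tail together with (1 + y) ln(1 + y)^2 <= 2 (1 + ln(1 + y)) h(y) bounds the
  probability by exp(-c_eps |D| log(n/|D|) / (1 + ln rho)). It remains to see that ln rho is
  negligible against |D| log(n/|D|) >= log(n/r). Under Assumption 1.2 this holds because
  ln rho <= ln (1/pbar_C) = o(log(n/r)/log r). Under Assumption 1.1 it holds when rho <= e, and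
  when rho > e the density of C makes C itself a signal set, with ln rho <= ln r.
*)

section \<open>The rate function h\<close>

lemma hfun_0 [simp]: "hfun 0 = 0"
  by (simp add: hfun_def)

lemma hfun_e_minus_1: "hfun (exp 1 - 1) = 1"
  by (simp add: hfun_def)

text \<open>h is convex with derivative ln (1 + x).\<close>
lemma hfun_ge_tangent:
  fixes a b :: real
  assumes a: "0 \<le> a" and b: "0 \<le> b"
  shows "hfun a + (b - a) * ln (1 + a) \<le> hfun b"
proof -
  have "ln ((1 + a) / (1 + b)) \<le> (1 + a) / (1 + b) - 1"
    using a b by (intro ln_le_minus_one) auto
  moreover have "ln ((1 + a) / (1 + b)) = ln (1 + a) - ln (1 + b)"
    using a b by (simp add: ln_div)
  ultimately have "(1 + b) * (ln (1 + a) - ln (1 + b)) \<le> a - b"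
    using b by (simp add: field_simps)
  then show ?thesis
    unfolding hfun_def by (simp add: algebra_simps)
qed

lemma hfun_mono:
  fixes a b :: real
  assumes "0 \<le> a" "a \<le> b"
  shows "hfun a \<le> hfun b"
proof -
  have "0 \<le> (b - a) * ln (1 + a)"
    using assms by simp
  with hfun_ge_tangent[of a b] assms show ?thesis
    by linarith
qed

lemma hfun_strict_mono:
  fixes a b :: real
  assumes "0 \<le> a" "a < b"
  shows "hfun a < hfun b"
proof -
  define c where "c = (a + b) / 2"
  have "hfun c + (b - c) * ln (1 + c) \<le> hfun b"
    using assms by (intro hfun_ge_tangent) (auto simp: c_def)
  moreover have "0 < (b - c) * ln (1 + c)"
    using assms by (intro mult_pos_pos ln_gt_zero) (auto simp: c_def)
  moreover have "hfun a \<le> hfun c"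
    using assms by (intro hfun_mono) (auto simp: c_def)
  ultimately show ?thesis
    by linarith
qed

lemma hfun_attains:
  fixes s B :: real
  assumes "0 \<le> s" "s \<le> hfun B" "0 \<le> B"
  obtains x where "0 \<le> x" "x \<le> B" "hfun x = s"
proof -
  have "\<forall>x. 0 \<le> x \<and> x \<le> B \<longrightarrow> isCont hfun x"
    unfolding hfun_def by (intro allI impI continuous_intros) auto
  then show ?thesis
    using IVT[of hfun 0 s B] assms that by auto
qed

lemma hfun_attains_nonneg:
  fixes s :: real
  assumes "0 \<le> s"
  obtains x where "0 \<le> x" "hfun x = s"
proof -
  have "s \<le> hfun (s + exp 1)"
    using hfun_ge_tangent[of "exp 1 - 1" "s + exp 1"] assms by (simp add: hfun_e_minus_1 add_increasing)
  moreover have "0 \<le> s + exp 1"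
    using assms by (simp add: add_nonneg_nonneg)
  ultimately show ?thesis
    using hfun_attains[of s "s + exp 1"] assms that by blast
qed

lemma exp_times_sq_minus_two_ge:
  fixes l :: real
  assumes "0 \<le> l"
  shows "0 \<le> exp l * (l\<^sup>2 - 2) + 2 + 2 * l"
proof -
  let ?g = "\<lambda>x::real. exp x * (x\<^sup>2 + 2 * x - 2) + 2"
  let ?f = "\<lambda>x::real. exp x * (x\<^sup>2 - 2) + 2 + 2 * x"
  have g_nonneg: "0 \<le> ?g x" if "0 \<le> x" for x
  proof -
    have "?g 0 \<le> ?g x"
    proof (rule DERIV_nonneg_imp_nondecreasing[OF that])
      fix y :: real
      assume "0 \<le> y"
      have "DERIV ?g y :> exp y * (y\<^sup>2 + 4 * y)"
        by (auto intro!: derivative_eq_intros simp: power2_eq_square algebra_simps)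
      moreover have "0 \<le> exp y * (y\<^sup>2 + 4 * y)"
        using \<open>0 \<le> y\<close> by simp
      ultimately show "\<exists>z. DERIV ?g y :> z \<and> 0 \<le> z"
        by blast
    qed
    then show ?thesis
      by simp
  qed
  have "?f 0 \<le> ?f l"
  proof (rule DERIV_nonneg_imp_nondecreasing[OF assms])
    fix y :: real
    assume "0 \<le> y"
    have "DERIV ?f y :> ?g y"
      by (auto intro!: derivative_eq_intros simp: power2_eq_square algebra_simps)
    then show "\<exists>z. DERIV ?f y :> z \<and> 0 \<le> z"
      using g_nonneg[OF \<open>0 \<le> y\<close>] by blast
  qed
  then show ?thesis
    by simp
qed

lemma ln_sq_le_hfun:
  fixes y :: real
  assumes "0 \<le> y"
  shows "(1 + y) * (ln (1 + y))\<^sup>2 \<le> 2 * (1 + ln (1 + y)) * hfun y"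
proof -
  define l where "l = ln (1 + y)"
  have "0 \<le> l" and exp_l: "exp l = 1 + y"
    using assms by (simp_all add: l_def)
  have h_y: "hfun y = exp l * l - exp l + 1"
    unfolding hfun_def using exp_l by (simp add: l_def algebra_simps)
  have "2 * (1 + l) * hfun y - (1 + y) * l\<^sup>2 = exp l * (l\<^sup>2 - 2) + 2 + 2 * l"
    unfolding h_y exp_l[symmetric] by (simp add: algebra_simps power2_eq_square)
  with exp_times_sq_minus_two_ge[OF \<open>0 \<le> l\<close>] show ?thesis
    by (simp add: l_def)
qed

text \<open>The right-hand side is the Chernoff lower-tail exponent (m - A)^2 / (2 m) for the mean
  m = (1 + y) mu of e(D) under the alternative and the threshold A = (1 + x) mu.\<close>
lemma type_II_exponent_ge:
  fixes x y \<mu> s \<epsilon> :: real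
  assumes x: "0 \<le> x" "x \<le> y" "hfun x = (1 + \<epsilon> / 2) / (1 + \<epsilon>) * hfun y"
    and signal: "(1 + \<epsilon>) * s \<le> \<mu> * hfun y" and "0 < y" "0 < \<mu>" "0 < \<epsilon>"
  shows "\<epsilon>\<^sup>2 / (16 * (1 + \<epsilon>)) * s / (1 + ln (1 + y)) \<le> \<mu> * (y - x)\<^sup>2 / (2 * (1 + y))"
proof -
  define c where "c = \<epsilon> / (2 * (1 + \<epsilon>))"
  define l where "l = ln (1 + y)"
  have "0 < c" "0 < l" "0 < hfun y"
    using assms hfun_strict_mono[of 0 y] by (simp_all add: c_def l_def)
  have "c * hfun y = hfun y - hfun x"
    using assms by (simp add: c_def field_simps)
  also have "\<dots> \<le> (y - x) * l"
    using hfun_ge_tangent[of y x] assms by (simp add: l_def algebra_simps)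
  finally have c_bound: "c * hfun y \<le> (y - x) * l" .
  have "(c\<^sup>2 * (1 + y) * l\<^sup>2) * ((1 + \<epsilon>) * s) \<le> (c\<^sup>2 * (1 + y) * l\<^sup>2) * (\<mu> * hfun y)"
    using signal assms by (intro mult_left_mono) auto
  also have "\<dots> = (c\<^sup>2 * \<mu> * hfun y) * ((1 + y) * l\<^sup>2)"
    by (simp add: algebra_simps)
  also have "\<dots> \<le> (c\<^sup>2 * \<mu> * hfun y) * (2 * (1 + l) * hfun y)"
    using ln_sq_le_hfun[of y] assms \<open>0 < hfun y\<close> by (intro mult_left_mono) (auto simp: l_def)
  also have "\<dots> = 2 * (1 + l) * \<mu> * (c * hfun y)\<^sup>2"
    by (simp add: power2_eq_square algebra_simps)
  also have "\<dots> \<le> 2 * (1 + l) * \<mu> * ((y - x) * l)\<^sup>2"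
    using c_bound assms \<open>0 < c\<close> \<open>0 < l\<close> \<open>0 < hfun y\<close> by (intro mult_left_mono power_mono) auto
  finally have "(c\<^sup>2 * (1 + \<epsilon>) * s * (1 + y)) * l\<^sup>2 \<le> (2 * (1 + l) * \<mu> * (y - x)\<^sup>2) * l\<^sup>2"
    by (simp add: power_mult_distrib ac_simps)
  then have "c\<^sup>2 * (1 + \<epsilon>) * s * (1 + y) \<le> 2 * (1 + l) * \<mu> * (y - x)\<^sup>2"
    using \<open>0 < l\<close> by simp
  then have "c\<^sup>2 * (1 + \<epsilon>) / 4 * s / (1 + l) \<le> \<mu> * (y - x)\<^sup>2 / (2 * (1 + y))"
    using \<open>0 < l\<close> assms by (simp add: field_simps)
  moreover have "c\<^sup>2 * (1 + \<epsilon>) / 4 = \<epsilon>\<^sup>2 / (16 * (1 + \<epsilon>))"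
    using \<open>0 < \<epsilon>\<close> by (simp add: c_def divide_simps power2_eq_square) algebra
  ultimately show ?thesis
    by (simp add: l_def)
qed

section \<open>Elementary estimates\<close>

lemma exp_minus_le_quadratic:
  fixes b :: real
  assumes "0 \<le> b"
  shows "exp (- b) \<le> 1 - b + b\<^sup>2 / 2"
proof -
  let ?f = "\<lambda>x::real. 1 - x + x\<^sup>2 / 2 - exp (- x)"
  have "?f 0 \<le> ?f b"
  proof (rule DERIV_nonneg_imp_nondecreasing[OF assms])
    fix x :: real
    have "DERIV ?f x :> - 1 + x + exp (- x)"
      by (auto intro!: derivative_eq_intros simp: power2_eq_square)
    moreover have "0 \<le> - 1 + x + exp (- x)"
      using exp_ge_add_one_self[of "- x"] by simp
    ultimately show "\<exists>y. DERIV ?f x :> y \<and> 0 \<le> y"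
      by blast
  qed
  then show ?thesis
    by simp
qed

lemma pow_div_fact_le_exp:
  fixes x :: real
  assumes "0 \<le> x"
  shows "x ^ k / fact k \<le> exp x"
proof -
  have "(\<Sum>i\<in>{k}. x ^ i /\<^sub>R fact i) \<le> (\<Sum>i. x ^ i /\<^sub>R fact i)"
    using assms by (intro sum_le_suminf summable_exp_generic) auto
  then show ?thesis
    by (simp add: exp_def divide_inverse mult.commute)
qed

lemma binomial_le_exp:
  assumes "1 \<le> k" "k \<le> n"
  shows "real (n choose k) \<le> exp (real k + real k * ln (real n / real k))"
proof -
  have "(n choose k) * fact k \<le> n ^ k"
    using binomial_fact_lemma[OF assms(2)] fact_div_fact_le_pow[OF assms(2)]
    by (metis fact_nonzero mult.commute nonzero_mult_div_cancel_left mult.assoc)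
  then have "real (n choose k) * fact k \<le> real n ^ k"
    by (metis of_nat_fact of_nat_le_iff of_nat_mult of_nat_power)
  then have "real (n choose k) \<le> (real n / real k) ^ k * (real k ^ k / fact k)"
    using assms by (simp add: field_simps)
  also have "\<dots> \<le> (real n / real k) ^ k * exp (real k)"
    by (intro mult_left_mono pow_div_fact_le_exp) auto
  also have "(real n / real k) ^ k = exp (real k * ln (real n / real k))"
    using assms by (simp add: exp_of_nat_mult)
  finally show ?thesis
    by (simp add: exp_add mult.commute)
qed

lemma binomial_mul_exp_le:
  assumes "0 < \<epsilon>" "1 \<le> k" "k \<le> m" "m < n"
  shows "real (n choose k) * exp (- ((1 + \<epsilon> / 2) * (real k * ln (real n / real k))))
    \<le> exp (1 - \<epsilon> / 2 * ln (real n / real m)) ^ k"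
proof -
  have "ln (real n / real m) \<le> ln (real n / real k)"
    using assms by (intro ln_mono frac_le) auto
  then have "\<epsilon> / 2 * ln (real n / real m) \<le> \<epsilon> / 2 * ln (real n / real k)"
    using assms by (intro mult_left_mono) auto
  then have k_mono: "real k * (1 - \<epsilon> / 2 * ln (real n / real k)) \<le> real k * (1 - \<epsilon> / 2 * ln (real n / real m))"
    by (intro mult_left_mono) auto
  have "real (n choose k) * exp (- ((1 + \<epsilon> / 2) * (real k * ln (real n / real k))))
      \<le> exp (real k + real k * ln (real n / real k)) * exp (- ((1 + \<epsilon> / 2) * (real k * ln (real n / real k))))"
    using assms by (intro mult_right_mono binomial_le_exp) auto
  also have "\<dots> = exp (real k * (1 - \<epsilon> / 2 * ln (real n / real k)))"
    by (simp add: exp_add[symmetric] algebra_simps)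
  also have "\<dots> \<le> exp (real k * (1 - \<epsilon> / 2 * ln (real n / real m)))"
    using k_mono by simp
  finally show ?thesis
    by (simp add: exp_of_nat_mult)
qed

lemma sum_power_le_twice:
  fixes w :: real
  assumes "0 \<le> w" "w \<le> 1 / 2"
  shows "(\<Sum>k\<in>{1..m}. w ^ k) \<le> 2 * w"
proof -
  have "(1 - w) * (\<Sum>k<m. w ^ k) \<le> 1"
    using one_diff_power_eq[of w m, symmetric] assms by simp
  moreover have "0 \<le> (\<Sum>k<m. w ^ k)"
    using assms by (simp add: sum_nonneg)
  ultimately have "(\<Sum>k<m. w ^ k) \<le> 2"
    using assms mult_right_mono[of "1/2" "1 - w" "\<Sum>k<m. w ^ k"] by linarith
  then have "w * (\<Sum>k<m. w ^ k) \<le> w * 2"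
    using assms by (intro mult_left_mono) auto
  then show ?thesis
    unfolding One_nat_def sum.atLeast1_atMost_eq by (simp add: sum_distrib_left mult.commute)
qed

lemma ln_ratio_pos_iff: "0 < ln (real n / real m) \<longleftrightarrow> 0 < m \<and> m < n"
proof (cases "0 < m \<and> 0 < n")
  case True
  then show ?thesis
    by (simp add: ln_gt_zero_iff)
qed auto

lemma exp_affine_tendsto_0:
  fixes f :: "'a \<Rightarrow> real"
  assumes "filterlim f at_top F" "0 < c"
  shows "((\<lambda>x. exp (a - c * f x)) \<longlongrightarrow> 0) F"
proof -
  have "filterlim (\<lambda>x. - a + c * f x) at_top F"
    by (rule filterlim_tendsto_add_at_top[OF tendsto_const filterlim_tendsto_pos_mult_at_top[OF tendsto_const assms(2,1)]])
  then have "filterlim (\<lambda>x. a - c * f x) at_bot F"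
    unfolding filterlim_uminus_at_bot by simp
  then show ?thesis
    by (rule filterlim_compose[OF exp_at_bot])
qed

lemma Max_image_tendsto_0:
  fixes f :: "nat \<Rightarrow> 'a \<Rightarrow> real"
  assumes "\<And>n. finite (I n)" "\<forall>\<^sub>F n in sequentially. I n \<noteq> {}"
    and "\<forall>\<^sub>F n in sequentially. \<forall>i\<in>I n. 0 \<le> f n i"
    and "\<And>e. 0 < e \<Longrightarrow> \<forall>\<^sub>F n in sequentially. \<forall>i\<in>I n. f n i \<le> e"
  shows "(\<lambda>n. Max (f n ` I n)) \<longlonglongrightarrow> 0"
proof (rule order_tendstoI)
  fix a :: real
  assume "a < 0"
  from assms(2,3) show "\<forall>\<^sub>F n in sequentially. a < Max (f n ` I n)"
  proof eventually_elim
    case (elim n)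
    then obtain i where "i \<in> I n"
      by blast
    then have "f n i \<le> Max (f n ` I n)"
      using assms(1) by (intro Max_ge) auto
    then show ?case
      using elim \<open>i \<in> I n\<close> \<open>a < 0\<close> by fastforce
  qed
next
  fix a :: real
  assume "0 < a"
  have "\<forall>\<^sub>F n in sequentially. \<forall>i\<in>I n. f n i \<le> a / 2"
    by (rule assms(4)) (use \<open>0 < a\<close> in simp)
  with assms(2) show "\<forall>\<^sub>F n in sequentially. Max (f n ` I n) < a"
  proof eventually_elim
    case (elim n)
    then have "Max (f n ` I n) \<le> a / 2"
      using assms(1) by (subst Max_le_iff) auto
    then show ?case
      using \<open>0 < a\<close> by simp
  qed
qed

section \<open>Independent Bernoulli families\<close>

definition bernoulli_weight :: "'a set \<Rightarrow> ('a \<Rightarrow> real) \<Rightarrow> 'a set \<Rightarrow> real" where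
  "bernoulli_weight P q G = (\<Prod>e\<in>P. if e \<in> G then q e else 1 - q e)"

definition bernoulli_expectation :: "'a set \<Rightarrow> ('a \<Rightarrow> real) \<Rightarrow> ('a set \<Rightarrow> real) \<Rightarrow> real" where
  "bernoulli_expectation P q f = (\<Sum>G\<in>Pow P. bernoulli_weight P q G * f G)"

definition bernoulli_prob :: "'a set \<Rightarrow> ('a \<Rightarrow> real) \<Rightarrow> ('a set \<Rightarrow> bool) \<Rightarrow> real" where
  "bernoulli_prob P q S = (\<Sum>G\<in>Pow P. if S G then bernoulli_weight P q G else 0)"

lemma sum_Pow_prod_if:
  fixes a b :: "'a \<Rightarrow> real"
  assumes "finite P"
  shows "(\<Sum>G\<in>Pow P. \<Prod>e\<in>P. if e \<in> G then a e else b e) = (\<Prod>e\<in>P. a e + b e)"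
proof -
  have "(\<Prod>e\<in>P. a e + b e) = (\<Sum>G\<in>Pow P. (\<Prod>e\<in>G. a e) * (\<Prod>e\<in>P - G. b e))"
    using prod_add[OF assms] .
  also have "\<dots> = (\<Sum>G\<in>Pow P. \<Prod>e\<in>P. if e \<in> G then a e else b e)"
  proof (rule sum.cong[OF refl])
    fix G
    assume "G \<in> Pow P"
    then have "P \<inter> {e. e \<in> G} = G" "P \<inter> - {e. e \<in> G} = P - G"
      by auto
    then show "(\<Prod>e\<in>G. a e) * (\<Prod>e\<in>P - G. b e) = (\<Prod>e\<in>P. if e \<in> G then a e else b e)"
      using prod.If_cases[OF assms, of "\<lambda>e. e \<in> G" a b] by simp
  qed
  finally show ?thesis
    by simp
qed

locale bernoulli_family =
  fixes P :: "'a set" and q :: "'a \<Rightarrow> real"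
  assumes finite_P [simp]: "finite P"
    and q_range: "e \<in> P \<Longrightarrow> 0 \<le> q e \<and> q e \<le> 1"
begin

lemma weight_nonneg: "0 \<le> bernoulli_weight P q G"
  unfolding bernoulli_weight_def using q_range by (intro prod_nonneg) auto

lemma prob_nonneg: "0 \<le> bernoulli_prob P q S"
  unfolding bernoulli_prob_def by (intro sum_nonneg) (simp add: weight_nonneg)

lemma prob_mono:
  assumes "\<And>G. G \<subseteq> P \<Longrightarrow> S G \<Longrightarrow> S' G"
  shows "bernoulli_prob P q S \<le> bernoulli_prob P q S'"
  unfolding bernoulli_prob_def using assms weight_nonneg by (intro sum_mono) auto

lemma prob_False: "bernoulli_prob P q (\<lambda>G. False) = 0"
  by (simp add: bernoulli_prob_def)

lemma prob_union_le:
  assumes "finite F"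
  shows "bernoulli_prob P q (\<lambda>G. \<exists>D\<in>F. S D G) \<le> (\<Sum>D\<in>F. bernoulli_prob P q (S D))"
proof -
  have "bernoulli_prob P q (\<lambda>G. \<exists>D\<in>F. S D G)
      \<le> (\<Sum>G\<in>Pow P. \<Sum>D\<in>F. if S D G then bernoulli_weight P q G else 0)"
    unfolding bernoulli_prob_def
  proof (rule sum_mono)
    fix G
    show "(if \<exists>D\<in>F. S D G then bernoulli_weight P q G else 0)
        \<le> (\<Sum>D\<in>F. if S D G then bernoulli_weight P q G else 0)"
    proof (cases "\<exists>D\<in>F. S D G")
      case True
      then obtain D where "D \<in> F" "S D G"
        by blast
      then show ?thesis
        using member_le_sum[OF \<open>D \<in> F\<close>, of "\<lambda>D. if S D G then bernoulli_weight P q G else 0"]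
        by (simp add: weight_nonneg assms)
    next
      case False
      then show ?thesis
        by (auto intro!: sum_nonneg simp: weight_nonneg)
    qed
  qed
  also have "\<dots> = (\<Sum>D\<in>F. bernoulli_prob P q (S D))"
    unfolding bernoulli_prob_def by (rule sum.swap)
  finally show ?thesis .
qed

lemma markov_inequality:
  assumes "\<And>G. G \<subseteq> P \<Longrightarrow> 0 \<le> f G" and "\<And>G. G \<subseteq> P \<Longrightarrow> S G \<Longrightarrow> 1 \<le> f G"
  shows "bernoulli_prob P q S \<le> bernoulli_expectation P q f"
  unfolding bernoulli_prob_def bernoulli_expectation_def
proof (rule sum_mono)
  fix G
  assume "G \<in> Pow P"
  then show "(if S G then bernoulli_weight P q G else 0) \<le> bernoulli_weight P q G * f G"
    using assms[of G] weight_nonneg[of G] mult_left_mono[of 1 "f G" "bernoulli_weight P q G"]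
    by (auto simp: mult_nonneg_nonneg)
qed

lemma expectation_prod:
  "bernoulli_expectation P q (\<lambda>G. \<Prod>e\<in>P. if e \<in> G then z e else 1)
     = (\<Prod>e\<in>P. q e * z e + (1 - q e))"
  unfolding bernoulli_expectation_def bernoulli_weight_def prod.distrib[symmetric]
  by (simp add: if_distrib if_distribR sum_Pow_prod_if cong: if_cong)

lemma moment_generating_le:
  assumes "T \<subseteq> P"
  shows "bernoulli_expectation P q (\<lambda>G. exp (\<beta> * real (card (G \<inter> T))))
    \<le> exp ((\<Sum>e\<in>T. q e) * (exp \<beta> - 1))"
proof -
  define z where "z e = (if e \<in> T then exp \<beta> else 1)" for e
  \<comment> \<open>exp (beta |G \<inter> T|) factorises over the coordinates, so independence turns its expectation
    into a product.\<close>
  have exp_eq: "exp (\<beta> * real (card (G \<inter> T))) = (\<Prod>e\<in>P. if e \<in> G then z e else 1)"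
    if "G \<subseteq> P" for G
  proof -
    have "(\<Prod>e\<in>P. if e \<in> G then z e else 1) = (\<Prod>e\<in>P. if e \<in> G \<inter> T then exp \<beta> else 1)"
      by (rule prod.cong) (auto simp: z_def)
    also have "\<dots> = exp \<beta> ^ card (P \<inter> (G \<inter> T))"
      by (simp add: prod.If_cases Int_def)
    also have "P \<inter> (G \<inter> T) = G \<inter> T"
      using that by auto
    finally show ?thesis
      using exp_of_nat_mult[of "card (G \<inter> T)" \<beta>] by (simp add: mult.commute)
  qed
  have "bernoulli_expectation P q (\<lambda>G. exp (\<beta> * real (card (G \<inter> T))))
      = bernoulli_expectation P q (\<lambda>G. \<Prod>e\<in>P. if e \<in> G then z e else 1)"
    unfolding bernoulli_expectation_def by (intro sum.cong) (auto simp: exp_eq)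
  also have "\<dots> = (\<Prod>e\<in>P. 1 + q e * (z e - 1))"
    by (simp add: expectation_prod algebra_simps)
  also have "\<dots> \<le> (\<Prod>e\<in>P. exp (q e * (z e - 1)))"
  proof (rule prod_mono)
    fix e
    assume "e \<in> P"
    then have "0 \<le> q e" "q e \<le> 1"
      using q_range by auto
    moreover have "0 < z e"
      by (simp add: z_def)
    ultimately have "0 \<le> 1 - q e + q e * z e"
      by (simp add: add_increasing)
    then show "0 \<le> 1 + q e * (z e - 1) \<and> 1 + q e * (z e - 1) \<le> exp (q e * (z e - 1))"
      using exp_ge_add_one_self[of "q e * (z e - 1)"] by (simp add: algebra_simps)
  qed
  also have "\<dots> = exp (\<Sum>e\<in>P. q e * (z e - 1))"
    by (simp add: exp_sum)
  also have "(\<Sum>e\<in>P. q e * (z e - 1)) = (\<Sum>e\<in>P \<inter> T. q e * (exp \<beta> - 1))"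
    unfolding sum.inter_restrict[OF finite_P] by (rule sum.cong) (auto simp: z_def)
  also have "\<dots> = (\<Sum>e\<in>T. q e) * (exp \<beta> - 1)"
    using assms by (simp add: Int_absorb1 sum_distrib_right)
  finally show ?thesis .
qed

lemma chernoff_upper_tail:
  assumes "T \<subseteq> P" "0 \<le> \<beta>"
  shows "bernoulli_prob P q (\<lambda>G. A \<le> real (card (G \<inter> T)))
    \<le> exp (- \<beta> * A + (\<Sum>e\<in>T. q e) * (exp \<beta> - 1))"
proof -
  have "bernoulli_prob P q (\<lambda>G. A \<le> real (card (G \<inter> T)))
      \<le> bernoulli_expectation P q (\<lambda>G. exp (- \<beta> * A) * exp (\<beta> * real (card (G \<inter> T))))"
    using assms(2) by (intro markov_inequality) (auto simp: exp_add[symmetric] mult_left_mono)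
  also have "\<dots> = exp (- \<beta> * A) * bernoulli_expectation P q (\<lambda>G. exp (\<beta> * real (card (G \<inter> T))))"
    by (simp add: bernoulli_expectation_def sum_distrib_left algebra_simps)
  also have "\<dots> \<le> exp (- \<beta> * A) * exp ((\<Sum>e\<in>T. q e) * (exp \<beta> - 1))"
    using moment_generating_le[OF assms(1)] by simp
  finally show ?thesis
    by (simp add: exp_add[symmetric])
qed

lemma chernoff_lower_tail:
  assumes "T \<subseteq> P" and m: "m = (\<Sum>e\<in>T. q e)" "0 < m" and "A \<le> m"
  shows "bernoulli_prob P q (\<lambda>G. real (card (G \<inter> T)) \<le> A) \<le> exp (- ((m - A)\<^sup>2 / (2 * m)))"
proof -
  define \<beta> where "\<beta> = (m - A) / m"
  have "0 \<le> \<beta>"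
    using assms by (simp add: \<beta>_def)
  have "bernoulli_prob P q (\<lambda>G. real (card (G \<inter> T)) \<le> A)
      \<le> bernoulli_expectation P q (\<lambda>G. exp (\<beta> * A) * exp ((- \<beta>) * real (card (G \<inter> T))))"
    using \<open>0 \<le> \<beta>\<close> by (intro markov_inequality) (auto simp: exp_add[symmetric] mult_left_mono)
  also have "\<dots> = exp (\<beta> * A) * bernoulli_expectation P q (\<lambda>G. exp ((- \<beta>) * real (card (G \<inter> T))))"
    by (simp add: bernoulli_expectation_def sum_distrib_left algebra_simps)
  also have "\<dots> \<le> exp (\<beta> * A) * exp (m * (exp (- \<beta>) - 1))"
    using moment_generating_le[OF assms(1), of "- \<beta>"] m(1) by simp
  also have "\<dots> \<le> exp (\<beta> * A) * exp (m * (- \<beta> + \<beta>\<^sup>2 / 2))"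
    using exp_minus_le_quadratic[OF \<open>0 \<le> \<beta>\<close>] m(2) by simp
  also have "\<dots> = exp (- ((m - A)\<^sup>2 / (2 * m)))"
    using m(2) by (simp add: \<beta>_def exp_add[symmetric] field_simps power2_eq_square)
  finally show ?thesis .
qed

end

section \<open>Edge counts and the scan statistic\<close>

lemma graph_prob_eq_bernoulli_prob: "graph_prob n q S = bernoulli_prob (pairs n) q S"
  unfolding graph_prob_def bernoulli_prob_def bernoulli_weight_def ..

lemma finite_pairs [simp]: "finite (pairs n)"
  by (rule finite_subset[of _ "{1..n} \<times> {1..n}"]) (auto simp: pairs_def)

definition pairs_within :: "nat \<Rightarrow> nat set \<Rightarrow> (nat \<times> nat) set" where
  "pairs_within n D = {(i, j). (i, j) \<in> pairs n \<and> i \<in> D \<and> j \<in> D}"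

lemma pairs_within_subset: "pairs_within n D \<subseteq> pairs n"
  by (auto simp: pairs_within_def)

lemma edges_in_eq_card: "G \<subseteq> pairs n \<Longrightarrow> edges_in G D = card (G \<inter> pairs_within n D)"
  unfolding edges_in_def pairs_within_def by (rule arg_cong[where f = card]) auto

lemma mean_edges_eq_sum: "mean_edges p n D = sum (null_q p n) (pairs_within n D)"
  unfolding mean_edges_def pairs_within_def null_q_def ..

lemma sum_alt_q_pairs_within:
  "D \<subseteq> C \<Longrightarrow> sum (alt_q p \<rho> n C) (pairs_within n D) = \<rho> n C * mean_edges p n D"
  unfolding mean_edges_eq_sum sum_distrib_left
  by (rule sum.cong) (auto simp: alt_q_def null_q_def pairs_within_def)

lemma card_pairs_within_le:
  assumes "finite D"
  shows "card (pairs_within n D) \<le> card D choose 2"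
proof -
  have "inj_on (\<lambda>(i, j). {i, j}) (pairs_within n D)"
    by (auto simp: inj_on_def pairs_within_def pairs_def doubleton_eq_iff)
  moreover have "(\<lambda>(i, j). {i, j}) ` pairs_within n D \<subseteq> {B. B \<subseteq> D \<and> card B = 2}"
    by (auto simp: pairs_within_def pairs_def)
  ultimately have "card (pairs_within n D) \<le> card {B. B \<subseteq> D \<and> card B = 2}"
    using assms by (intro card_inj_on_le) auto
  then show ?thesis
    using n_subsets[OF assms] by simp
qed

lemma pbar_eq_0_if_card_le_1: "card D \<le> 1 \<Longrightarrow> pbar p n D = 0"
  by (simp add: pbar_def)

definition scan_norm :: "nat \<Rightarrow> nat set \<Rightarrow> real" where
  "scan_norm n D = real (card D) * ln (real n / real (card D))"

lemma log_ratio_le_scan_norm: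
  assumes "D \<subseteq> C" "D \<noteq> {}" "finite C" "card C < n"
  shows "ln (real n / real (card C)) \<le> scan_norm n D"
proof -
  have "1 \<le> card D" "card D \<le> card C"
    using assms by (auto simp: Suc_le_eq card_gt_0_iff card_mono finite_subset)
  then have "ln (real n / real (card C)) \<le> ln (real n / real (card D))"
    using assms by (intro ln_mono frac_le) auto
  moreover have "0 < ln (real n / real (card D))"
    using \<open>1 \<le> card D\<close> \<open>card D \<le> card C\<close> assms(4) by (simp add: ln_ratio_pos_iff)
  moreover have "ln (real n / real (card D)) \<le> real (card D) * ln (real n / real (card D))"
    using \<open>1 \<le> card D\<close> \<open>0 < ln (real n / real (card D))\<close> by (simp add: mult_le_cancel_right1)
  ultimately show ?thesis
    unfolding scan_norm_def by linarith
qed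

lemma scan_norm_pos:
  assumes "D \<subseteq> C" "D \<noteq> {}" "finite C" "card C < n"
  shows "0 < scan_norm n D"
proof -
  have "0 < card C"
    using assms(1-3) by (metis card_gt_0_iff subset_empty)
  then have "0 < ln (real n / real (card C))"
    using assms(4) by (simp add: ln_ratio_pos_iff)
  then show ?thesis
    using log_ratio_le_scan_norm[OF assms] by linarith
qed

lemma scan_norm_le_if_signal_ratio_ge:
  assumes "D \<subseteq> C" "D \<noteq> {}" "finite C" "card C < n"
    and "1 + \<epsilon> \<le> mean_edges p n D * hfun z / (real (card D) * ln (real n / real (card D)))"
  shows "(1 + \<epsilon>) * scan_norm n D \<le> mean_edges p n D * hfun z"
  using scan_norm_pos[OF assms(1-4)] assms(5) by (simp add: scan_norm_def pos_le_divide_eq)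

lemma Tk_eq:
  assumes "G \<subseteq> pairs n" "mean_edges p n D \<noteq> 0"
  shows "Tk p n D G = mean_edges p n D
      * hfun (max (real (card (G \<inter> pairs_within n D)) / mean_edges p n D - 1) 0) / scan_norm n D"
  using assms by (simp add: Tk_def scan_norm_def edges_in_eq_card Let_def)

lemma count_ge_if_Tk_ge:
  assumes "G \<subseteq> pairs n" "0 < mean_edges p n D" "0 < scan_norm n D" "0 < x"
    and "mean_edges p n D * hfun x / scan_norm n D \<le> Tk p n D G"
  shows "mean_edges p n D * (1 + x) \<le> real (card (G \<inter> pairs_within n D))"
proof (rule ccontr)
  define u where "u = max (real (card (G \<inter> pairs_within n D)) / mean_edges p n D - 1) 0"
  assume "\<not> ?thesis"
  then have "u < x"
    using assms by (simp add: u_def field_simps)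
  then have "hfun u < hfun x"
    by (intro hfun_strict_mono) (auto simp: u_def)
  then have "Tk p n D G < mean_edges p n D * hfun x / scan_norm n D"
    using assms by (simp add: Tk_eq u_def divide_strict_right_mono)
  then show False
    using assms(5) by linarith
qed

lemma Tk_ge_if_count_ge:
  assumes "G \<subseteq> pairs n" "0 < mean_edges p n D" "0 < scan_norm n D" "0 \<le> x"
    and "mean_edges p n D * (1 + x) \<le> real (card (G \<inter> pairs_within n D))"
  shows "mean_edges p n D * hfun x / scan_norm n D \<le> Tk p n D G"
proof -
  define u where "u = max (real (card (G \<inter> pairs_within n D)) / mean_edges p n D - 1) 0"
  have "x \<le> u"
    using assms by (auto simp: u_def le_max_iff_disj field_simps)
  then have "hfun x \<le> hfun u"
    using assms by (intro hfun_mono) auto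
  then show ?thesis
    using assms by (simp add: Tk_eq u_def divide_right_mono)
qed

lemma count_le_if_no_rejection:
  assumes "G \<subseteq> pairs n" "\<not> scan_test p r \<epsilon> n G" "D \<subseteq> {1..n}" "card D \<le> r n"
    and "0 < mean_edges p n D" "0 < scan_norm n D" "0 \<le> x"
    and "(1 + \<epsilon> / 2) * scan_norm n D \<le> mean_edges p n D * hfun x"
  shows "real (card (G \<inter> pairs_within n D)) \<le> mean_edges p n D * (1 + x)"
proof (rule ccontr)
  assume "\<not> ?thesis"
  then have "mean_edges p n D * hfun x / scan_norm n D \<le> Tk p n D G"
    using assms by (intro Tk_ge_if_count_ge) auto
  moreover have "1 + \<epsilon> / 2 \<le> mean_edges p n D * hfun x / scan_norm n D"
    using assms by (simp add: pos_le_divide_eq)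
  moreover have "1 \<le> card D"
    using assms(3,6) by (auto simp: scan_norm_def Suc_le_eq card_gt_0_iff zero_less_mult_iff)
  ultimately show False
    using assms(2-4) by (auto simp: scan_test_def)
qed

section \<open>The null hypothesis\<close>

locale edge_probabilities =
  fixes p :: "nat \<Rightarrow> nat \<Rightarrow> nat \<Rightarrow> real"
  assumes p_range: "\<And>n i j. i \<noteq> j \<Longrightarrow> 0 \<le> p n i j \<and> p n i j \<le> 1"
begin

lemma bernoulli_family_null: "bernoulli_family (pairs n) (null_q p n)"
proof
  fix e
  assume "e \<in> pairs n"
  then show "0 \<le> null_q p n e \<and> null_q p n e \<le> 1"
    using p_range by (auto simp: null_q_def pairs_def)
qed simp

lemma mean_edges_nonneg: "0 \<le> mean_edges p n D"
  using bernoulli_family.q_range[OF bernoulli_family_null] pairs_within_subset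
  unfolding mean_edges_eq_sum by (intro sum_nonneg) blast

lemma null_Tk_tail:
  assumes "0 < scan_norm n D" "0 < t"
  shows "graph_prob n (null_q p n) (\<lambda>G. t \<le> Tk p n D G) \<le> exp (- (t * scan_norm n D))"
proof -
  interpret bernoulli_family "pairs n" "null_q p n"
    by (rule bernoulli_family_null)
  define \<mu> where "\<mu> = mean_edges p n D"
  show ?thesis
  proof (cases "\<mu> = 0")
    case True
    then have "graph_prob n (null_q p n) (\<lambda>G. t \<le> Tk p n D G) \<le> bernoulli_prob (pairs n) (null_q p n) (\<lambda>G. False)"
      unfolding graph_prob_eq_bernoulli_prob using assms by (intro prob_mono) (simp add: Tk_def \<mu>_def)
    then show ?thesis
      using prob_False exp_ge_zero order.trans by metis
  next
    case False
    then have "0 < \<mu>"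
      using mean_edges_nonneg[of n D] by (simp add: \<mu>_def)
    define s where "s = t * scan_norm n D / \<mu>"
    have "0 < s"
      using assms \<open>0 < \<mu>\<close> by (simp add: s_def)
    then obtain x where x: "0 \<le> x" "hfun x = s"
      using hfun_attains_nonneg[of s] by auto
    then have "0 < x"
      using \<open>0 < s\<close> by (cases "x = 0") auto
    have "\<mu> * hfun x / scan_norm n D = t"
      using x assms \<open>0 < \<mu>\<close> by (simp add: s_def)
    then have "graph_prob n (null_q p n) (\<lambda>G. t \<le> Tk p n D G)
        \<le> bernoulli_prob (pairs n) (null_q p n) (\<lambda>G. \<mu> * (1 + x) \<le> real (card (G \<inter> pairs_within n D)))"
      unfolding graph_prob_eq_bernoulli_prob \<mu>_def
      using assms \<open>0 < \<mu>\<close> \<open>0 < x\<close> by (intro prob_mono count_ge_if_Tk_ge) (auto simp: \<mu>_def)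
    \<comment> \<open>With the tilt ln (1 + x) the Chernoff exponent is exactly mu h(x).\<close>
    also have "\<dots> \<le> exp (- ln (1 + x) * (\<mu> * (1 + x)) + \<mu> * (exp (ln (1 + x)) - 1))"
      using chernoff_upper_tail[OF pairs_within_subset[of n D], where \<beta> = "ln (1 + x)" and A = "\<mu> * (1 + x)"] x
      by (simp add: \<mu>_def mean_edges_eq_sum)
    also have "\<dots> = exp (- (\<mu> * hfun x))"
      using x(1) by (simp add: hfun_def algebra_simps)
    also have "\<mu> * hfun x = t * scan_norm n D"
      using x \<open>0 < \<mu>\<close> by (simp add: s_def)
    finally show ?thesis .
  qed
qed

lemma type_I_error_le:
  assumes "0 < \<epsilon>" "r n < n"
  shows "graph_prob n (null_q p n) (scan_test p r \<epsilon> n)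
    \<le> (\<Sum>k\<in>{1..r n}. exp (1 - \<epsilon> / 2 * ln (real n / real (r n))) ^ k)"
proof -
  interpret bernoulli_family "pairs n" "null_q p n"
    by (rule bernoulli_family_null)
  define F where "F = {D. D \<subseteq> {1..n} \<and> 1 \<le> card D \<and> card D \<le> r n}"
  define g where "g k = exp (- ((1 + \<epsilon> / 2) * (real k * ln (real n / real k))))" for k
  have "finite F"
    unfolding F_def by (rule finite_subset[of _ "Pow {1..n}"]) auto
  have "graph_prob n (null_q p n) (scan_test p r \<epsilon> n)
      \<le> bernoulli_prob (pairs n) (null_q p n) (\<lambda>G. \<exists>D\<in>F. 1 + \<epsilon> / 2 \<le> Tk p n D G)"
    unfolding graph_prob_eq_bernoulli_prob by (rule prob_mono) (auto simp: scan_test_def F_def)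
  also have "\<dots> \<le> (\<Sum>D\<in>F. g (card D))"
  proof (rule order.trans[OF prob_union_le[OF \<open>finite F\<close>] sum_mono])
    fix D
    assume "D \<in> F"
    then have "0 < scan_norm n D"
      using assms(2) by (auto simp: F_def scan_norm_def ln_ratio_pos_iff)
    then show "bernoulli_prob (pairs n) (null_q p n) (\<lambda>G. 1 + \<epsilon> / 2 \<le> Tk p n D G) \<le> g (card D)"
      using null_Tk_tail[of n D "1 + \<epsilon> / 2"] assms(1)
      by (simp add: g_def scan_norm_def graph_prob_eq_bernoulli_prob)
  qed
  also have "\<dots> = (\<Sum>k\<in>{1..r n}. \<Sum>D\<in>{D \<in> F. card D = k}. g k)"
    by (subst sum.group[symmetric, OF \<open>finite F\<close>, of "{1..r n}" card]) (auto simp: F_def intro!: sum.cong)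
  also have "\<dots> = (\<Sum>k\<in>{1..r n}. real (n choose k) * g k)"
  proof (rule sum.cong[OF refl])
    fix k
    assume "k \<in> {1..r n}"
    then have "{D \<in> F. card D = k} = {D. D \<subseteq> {1..n} \<and> card D = k}"
      by (auto simp: F_def)
    then show "(\<Sum>D\<in>{D \<in> F. card D = k}. g k) = real (n choose k) * g k"
      using n_subsets[of "{1..n}" k] by simp
  qed
  also have "\<dots> \<le> (\<Sum>k\<in>{1..r n}. exp (1 - \<epsilon> / 2 * ln (real n / real (r n))) ^ k)"
    unfolding g_def using assms by (intro sum_mono binomial_mul_exp_le) auto
  finally show ?thesis .
qed

lemma type_I_error_tendsto_0:
  assumes "0 < \<epsilon>" and log_ratio: "filterlim (\<lambda>n. ln (real n / real (r n))) at_top sequentially"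
  shows "(\<lambda>n. graph_prob n (null_q p n) (scan_test p r \<epsilon> n)) \<longlonglongrightarrow> 0"
proof (rule tendsto_sandwich[of "\<lambda>_. 0"])
  define w where "w n = exp (1 - \<epsilon> / 2 * ln (real n / real (r n)))" for n
  have "w \<longlonglongrightarrow> 0"
    unfolding w_def using assms by (intro exp_affine_tendsto_0) auto
  then have "\<forall>\<^sub>F n in sequentially. w n \<le> 1 / 2"
    using order_tendstoD(2)[OF \<open>w \<longlonglongrightarrow> 0\<close>, of "1 / 2"] by (auto elim: eventually_mono)
  moreover have "\<forall>\<^sub>F n in sequentially. 0 < ln (real n / real (r n))"
    using log_ratio unfolding filterlim_at_top_dense by blast
  ultimately show "\<forall>\<^sub>F n in sequentially. graph_prob n (null_q p n) (scan_test p r \<epsilon> n) \<le> 2 * w n"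
  proof eventually_elim
    case (elim n)
    then show ?case
      using type_I_error_le[of \<epsilon> r n] sum_power_le_twice[of "w n" "r n"] assms(1)
      by (simp add: ln_ratio_pos_iff w_def)
  qed
  show "\<forall>\<^sub>F n in sequentially. 0 \<le> graph_prob n (null_q p n) (scan_test p r \<epsilon> n)"
    using bernoulli_family.prob_nonneg[OF bernoulli_family_null] by (simp add: graph_prob_eq_bernoulli_prob)
  show "(\<lambda>n. 2 * w n) \<longlonglongrightarrow> 0"
    using tendsto_mult_right_zero[OF \<open>w \<longlonglongrightarrow> 0\<close>, of 2] by simp
qed (rule tendsto_const)

end

section \<open>The planted alternative\<close>

locale planted_model = edge_probabilities +
  fixes \<rho> :: "nat \<Rightarrow> nat set \<Rightarrow> real" and r :: "nat \<Rightarrow> nat"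
  assumes rho_gt: "\<And>n C. C \<subseteq> {1..n} \<Longrightarrow> card C = r n \<Longrightarrow> \<rho> n C > 1"
    and rho_le: "\<And>n C i j. C \<subseteq> {1..n} \<Longrightarrow> card C = r n \<Longrightarrow> i \<in> C \<Longrightarrow> j \<in> C \<Longrightarrow> i \<noteq> j
      \<Longrightarrow> \<rho> n C * p n i j \<le> 1"
begin

lemma bernoulli_family_alt:
  assumes "C \<subseteq> {1..n}" "card C = r n"
  shows "bernoulli_family (pairs n) (alt_q p \<rho> n C)"
proof
  fix e
  assume "e \<in> pairs n"
  then obtain i j where "e = (i, j)" "i \<noteq> j"
    by (auto simp: pairs_def)
  then show "0 \<le> alt_q p \<rho> n C e \<and> alt_q p \<rho> n C e \<le> 1"
    using p_range[of i j n] rho_gt[OF assms] rho_le[OF assms, of i j] by (auto simp: alt_q_def)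
qed simp

lemma ln_rho_le_ln_inv_pbar:
  assumes "C \<subseteq> {1..n}" "card C = r n" "2 \<le> r n" "0 < pbar p n C"
  shows "ln (\<rho> n C) \<le> ln (1 / pbar p n C)"
proof -
  have "finite C"
    using assms(1) finite_subset by blast
  have "mean_edges p n C \<le> (\<Sum>e\<in>pairs_within n C. 1 / \<rho> n C)"
    unfolding mean_edges_eq_sum
  proof (rule sum_mono)
    fix e
    assume "e \<in> pairs_within n C"
    then obtain i j where "e = (i, j)" "i \<in> C" "j \<in> C" "i \<noteq> j"
      by (auto simp: pairs_within_def pairs_def)
    then show "null_q p n e \<le> 1 / \<rho> n C"
      using rho_le[OF assms(1,2)] rho_gt[OF assms(1,2)] by (simp add: null_q_def field_simps)
  qed
  also have "\<dots> \<le> real (card C choose 2) / \<rho> n C"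
    using card_pairs_within_le[OF \<open>finite C\<close>, of n] rho_gt[OF assms(1,2)] by (simp add: divide_right_mono)
  finally have "\<rho> n C \<le> 1 / pbar p n C"
    using assms rho_gt[OF assms(1,2)] by (simp add: pbar_def field_simps)
  then show ?thesis
    using rho_gt[OF assms(1,2)] assms(4) by (subst ln_le_cancel_iff) auto
qed

lemma type_II_error_le:
  assumes C: "C \<subseteq> {1..n}" "card C = r n" and "D \<subseteq> C" "0 < scan_norm n D" "0 < \<epsilon>"
    and signal: "(1 + \<epsilon>) * scan_norm n D \<le> mean_edges p n D * hfun (\<rho> n C - 1)"
  shows "graph_prob n (alt_q p \<rho> n C) (\<lambda>G. \<not> scan_test p r \<epsilon> n G)
    \<le> exp (- (\<epsilon>\<^sup>2 / (16 * (1 + \<epsilon>)) * scan_norm n D / (1 + ln (\<rho> n C))))"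
proof -
  interpret bernoulli_family "pairs n" "alt_q p \<rho> n C"
    by (rule bernoulli_family_alt[OF C])
  define \<mu> where "\<mu> = mean_edges p n D"
  define y where "y = \<rho> n C - 1"
  define \<theta> where "\<theta> = (1 + \<epsilon> / 2) / (1 + \<epsilon>)"
  have "0 < y"
    using rho_gt[OF C] by (simp add: y_def)
  have "0 < hfun y"
    using hfun_strict_mono[of 0 y] \<open>0 < y\<close> by simp
  have "0 < \<mu> * hfun y"
    using signal assms(4,5) by (simp add: \<mu>_def y_def) (smt (verit) mult_pos_pos)
  then have "0 < \<mu>"
    using \<open>0 < hfun y\<close> by (simp add: zero_less_mult_iff)
  have "0 < \<theta>" "\<theta> < 1"
    using assms(5) by (simp_all add: \<theta>_def)
  then have "0 \<le> \<theta> * hfun y" "\<theta> * hfun y \<le> hfun y"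
    using \<open>0 < hfun y\<close> by (simp_all add: mult_le_cancel_right1)
  \<comment> \<open>Once e(D) exceeds (1 + x) mu, the statistic T_D reaches 1 + eps/2.\<close>
  then obtain x where x: "0 \<le> x" "x \<le> y" "hfun x = \<theta> * hfun y"
    using hfun_attains[of "\<theta> * hfun y" y] \<open>0 < y\<close> by auto
  have "(1 + \<epsilon> / 2) * scan_norm n D = \<theta> * ((1 + \<epsilon>) * scan_norm n D)"
    using assms(5) by (simp add: \<theta>_def)
  also have "\<dots> \<le> \<mu> * hfun x"
    using signal \<open>0 < \<theta>\<close> by (simp add: \<mu>_def y_def x(3))
  finally have level: "(1 + \<epsilon> / 2) * scan_norm n D \<le> \<mu> * hfun x" .
  have "D \<subseteq> {1..n}" "card D \<le> r n"
    using assms(3) C card_mono[of C D] finite_subset[of C "{1..n}"] by auto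
  define m where "m = \<rho> n C * \<mu>"
  have "0 < m" "\<mu> * (1 + x) \<le> m"
    using \<open>0 < \<mu>\<close> rho_gt[OF C] x(2) by (simp_all add: m_def y_def)
  have "graph_prob n (alt_q p \<rho> n C) (\<lambda>G. \<not> scan_test p r \<epsilon> n G)
      \<le> bernoulli_prob (pairs n) (alt_q p \<rho> n C) (\<lambda>G. real (card (G \<inter> pairs_within n D)) \<le> \<mu> * (1 + x))"
    unfolding graph_prob_eq_bernoulli_prob \<mu>_def
    using \<open>D \<subseteq> {1..n}\<close> \<open>card D \<le> r n\<close> \<open>0 < \<mu>\<close> assms(4) x(1) level
    by (intro prob_mono count_le_if_no_rejection) (auto simp: \<mu>_def)
  also have "\<dots> \<le> exp (- ((m - \<mu> * (1 + x))\<^sup>2 / (2 * m)))"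
    using \<open>0 < m\<close> \<open>\<mu> * (1 + x) \<le> m\<close> assms(3)
    by (intro chernoff_lower_tail pairs_within_subset) (simp_all add: m_def \<mu>_def sum_alt_q_pairs_within)
  also have "(m - \<mu> * (1 + x))\<^sup>2 / (2 * m) = \<mu> * (y - x)\<^sup>2 / (2 * (1 + y))"
    using \<open>0 < \<mu>\<close> rho_gt[OF C] by (simp add: m_def y_def power2_eq_square field_simps)
  also have "exp (- (\<mu> * (y - x)\<^sup>2 / (2 * (1 + y))))
      \<le> exp (- (\<epsilon>\<^sup>2 / (16 * (1 + \<epsilon>)) * scan_norm n D / (1 + ln (\<rho> n C))))"
    using type_II_exponent_ge[of x y \<epsilon> "scan_norm n D" \<mu>] x signal \<open>0 < y\<close> \<open>0 < \<mu>\<close> assms(5)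
    by (simp add: \<theta>_def \<mu>_def y_def)
  finally show ?thesis .
qed

definition detectable :: "real \<Rightarrow> real \<Rightarrow> nat \<Rightarrow> nat set \<Rightarrow> nat set \<Rightarrow> bool" where
  "detectable \<epsilon> M n C D \<longleftrightarrow> D \<subseteq> C \<and> D \<noteq> {}
    \<and> (1 + \<epsilon>) * scan_norm n D \<le> mean_edges p n D * hfun (\<rho> n C - 1)
    \<and> M * (1 + ln (\<rho> n C)) \<le> scan_norm n D"

lemma type_II_error_le_if_detectable:
  assumes C: "C \<subseteq> {1..n}" "card C = r n" and "r n < n" "detectable \<epsilon> M n C D" "0 < \<epsilon>" "0 \<le> M"
  shows "graph_prob n (alt_q p \<rho> n C) (\<lambda>G. \<not> scan_test p r \<epsilon> n G) \<le> exp (- (\<epsilon>\<^sup>2 / (16 * (1 + \<epsilon>)) * M))"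
proof -
  have D: "D \<subseteq> C" "D \<noteq> {}" "(1 + \<epsilon>) * scan_norm n D \<le> mean_edges p n D * hfun (\<rho> n C - 1)"
      and M: "M * (1 + ln (\<rho> n C)) \<le> scan_norm n D"
    using assms(4) by (simp_all add: detectable_def)
  have "finite C"
    using C(1) finite_subset by blast
  then have "0 < scan_norm n D"
    using scan_norm_pos[OF D(1,2)] C(2) assms(3) by simp
  have "0 < 1 + ln (\<rho> n C)"
    using rho_gt[OF C] by (smt (verit) ln_gt_zero)
  then have "M \<le> scan_norm n D / (1 + ln (\<rho> n C))"
    using M by (simp add: pos_le_divide_eq)
  then have rate_le: "\<epsilon>\<^sup>2 / (16 * (1 + \<epsilon>)) * M \<le> \<epsilon>\<^sup>2 / (16 * (1 + \<epsilon>)) * (scan_norm n D / (1 + ln (\<rho> n C)))"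
    using assms(5) by (intro mult_left_mono) auto
  have "graph_prob n (alt_q p \<rho> n C) (\<lambda>G. \<not> scan_test p r \<epsilon> n G)
      \<le> exp (- (\<epsilon>\<^sup>2 / (16 * (1 + \<epsilon>)) * scan_norm n D / (1 + ln (\<rho> n C))))"
    by (rule type_II_error_le[OF C D(1) \<open>0 < scan_norm n D\<close> assms(5) D(3)])
  also have "\<dots> \<le> exp (- (\<epsilon>\<^sup>2 / (16 * (1 + \<epsilon>)) * M))"
    using rate_le by simp
  finally show ?thesis .
qed

lemma detectable_if_log_ratio_ge:
  assumes "C \<subseteq> {1..n}" "card C = r n" "r n < n" "D \<subseteq> C" "D \<noteq> {}"
    and "1 + \<epsilon> \<le> mean_edges p n D * hfun (\<rho> n C - 1) / (real (card D) * ln (real n / real (card D)))"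
    and "M * (1 + ln (\<rho> n C)) \<le> ln (real n / real (r n))"
  shows "detectable \<epsilon> M n C D"
proof -
  have "finite C"
    using assms(1) finite_subset by blast
  then have "(1 + \<epsilon>) * scan_norm n D \<le> mean_edges p n D * hfun (\<rho> n C - 1)"
    using scan_norm_le_if_signal_ratio_ge[OF assms(4,5) \<open>finite C\<close> _ assms(6)] assms(2,3) by simp
  moreover have "ln (real n / real (r n)) \<le> scan_norm n D"
    using log_ratio_le_scan_norm[OF assms(4,5) \<open>finite C\<close>] assms(2,3) by simp
  ultimately show ?thesis
    using assms(4,5,7) by (simp add: detectable_def)
qed

end

section \<open>Asymptotics under Assumptions 1.1 and 1.2\<close>

lemma assumption_1_1_dense:
  assumes "assumption_1_1 p r" "0 < c"
  shows "\<forall>\<^sub>F n in sequentially. \<forall>C. C \<subseteq> {1..n} \<and> card C = r n \<longrightarrow>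
    0 < pbar p n C \<and> ln (real n / real (r n)) \<le> c * real (r n) * pbar p n C"
proof -
  have "\<forall>c>0. \<forall>\<^sub>F n in sequentially. \<forall>C. C \<subseteq> {1..n} \<and> card C = r n \<longrightarrow>
      0 < pbar p n C \<and> ln (real n / real (r n)) \<le> c * real (r n) * pbar p n C"
    using assms(1) unfolding assumption_1_1_def by (elim exE conjE)
  then show ?thesis
    using assms(2) by blast
qed

lemma assumption_1_2_sparse:
  assumes "assumption_1_2 p r" "0 < c"
  shows "\<forall>\<^sub>F n in sequentially. \<forall>C. C \<subseteq> {1..n} \<and> card C = r n \<longrightarrow>
    0 < pbar p n C \<and> ln (1 / pbar p n C) * ln (real (r n)) \<le> c * ln (real n / real (r n))"
  using assms unfolding assumption_1_2_def by blast

lemma eventually_pbar_pos: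
  assumes "assumption_1_1 p r \<or> assumption_1_2 p r"
  shows "\<forall>\<^sub>F n in sequentially. \<forall>C. C \<subseteq> {1..n} \<and> card C = r n \<longrightarrow> 0 < pbar p n C"
  using assms
proof
  assume "assumption_1_1 p r"
  from assumption_1_1_dense[OF this zero_less_one] show ?thesis
    by (rule eventually_mono) blast
next
  assume "assumption_1_2 p r"
  from assumption_1_2_sparse[OF this zero_less_one] show ?thesis
    by (rule eventually_mono) blast
qed

lemma log_ratio_tendsto_if_bigo:
  assumes "(\<lambda>n. real (r n)) \<in> O(\<lambda>n. real n powr a)" "a < 1" "\<forall>\<^sub>F n in sequentially. 1 \<le> r n"
  shows "filterlim (\<lambda>n. ln (real n / real (r n))) at_top sequentially"
proof -
  obtain K where "0 < K" and K: "\<forall>\<^sub>F n in sequentially. norm (real (r n)) \<le> K * norm (real n powr a)"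
    using assms(1) by (elim landau_o.bigE)
  have "filterlim (\<lambda>n. - ln K + (1 - a) * ln (real n)) at_top sequentially"
    using assms(2) by (intro filterlim_tendsto_add_at_top[OF tendsto_const] filterlim_tendsto_pos_mult_at_top[OF tendsto_const]
        filterlim_compose[OF ln_at_top filterlim_real_sequentially]) auto
  moreover have "\<forall>\<^sub>F n in sequentially. - ln K + (1 - a) * ln (real n) \<le> ln (real n / real (r n))"
    using K assms(3) eventually_gt_at_top[of 0]
  proof eventually_elim
    case (elim n)
    then have "ln (real (r n)) \<le> ln (K * real n powr a)"
      by (intro ln_mono) auto
    also have "\<dots> = ln K + a * ln (real n)"
      using \<open>0 < K\<close> elim by (simp add: ln_mult ln_powr)
    finally show ?case
      using elim by (simp add: ln_div algebra_simps)
  qed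
  ultimately show ?thesis
    by (rule filterlim_at_top_mono)
qed

lemma log_ratio_tendsto_if_ln_ratio_0:
  assumes "(\<lambda>n. ln (real (r n)) / ln (real n)) \<longlonglongrightarrow> 0" "\<forall>\<^sub>F n in sequentially. 1 \<le> r n"
  shows "filterlim (\<lambda>n. ln (real n / real (r n))) at_top sequentially"
proof -
  have ln_n: "filterlim (\<lambda>n. ln (real n)) at_top sequentially"
    by (rule filterlim_compose[OF ln_at_top filterlim_real_sequentially])
  then have "filterlim (\<lambda>n. 1 / 2 * ln (real n)) at_top sequentially"
    by (intro filterlim_tendsto_pos_mult_at_top[OF tendsto_const]) auto
  moreover have "\<forall>\<^sub>F n in sequentially. ln (real (r n)) / ln (real n) < 1 / 2"
    using order_tendstoD(2)[OF assms(1), of "1 / 2"] by simp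
  then have "\<forall>\<^sub>F n in sequentially. 1 / 2 * ln (real n) \<le> ln (real n / real (r n))"
    using assms(2) ln_n[unfolded filterlim_at_top_dense, rule_format, of 0]
  proof eventually_elim
    case (elim n)
    then have "0 < real n"
      by (cases "n = 0") auto
    moreover have "ln (real (r n)) < ln (real n) / 2"
      using elim by (simp add: divide_less_eq)
    ultimately show ?case
      using elim by (simp add: ln_div)
  qed
  ultimately show ?thesis
    by (rule filterlim_at_top_mono)
qed

lemma log_ratio_tendsto:
  assumes "assumption_1_1 p r \<or> assumption_1_2 p r"
  shows "filterlim (\<lambda>n. ln (real n / real (r n))) at_top sequentially"
proof -
  have "\<forall>\<^sub>F n in sequentially. 1 \<le> r n"
    using eventually_pbar_pos[OF assms]
  proof eventually_elim
    case (elim n)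
    have "r n \<noteq> 0"
    proof
      assume "r n = 0"
      then have "0 < pbar p n {}"
        using elim by simp
      then show False
        by (simp add: pbar_eq_0_if_card_le_1)
    qed
    then show ?case
      by simp
  qed
  show ?thesis
    using assms
  proof
    assume "assumption_1_1 p r"
    then obtain \<delta> where "0 < \<delta>" "(\<lambda>n. real (r n)) \<in> O(\<lambda>n. real n powr (1 / 2 - \<delta>))"
      unfolding assumption_1_1_def by blast
    then show ?thesis
      using \<open>\<forall>\<^sub>F n in sequentially. 1 \<le> r n\<close> by (intro log_ratio_tendsto_if_bigo) auto
  next
    assume "assumption_1_2 p r"
    then show ?thesis
      using \<open>\<forall>\<^sub>F n in sequentially. 1 \<le> r n\<close> unfolding assumption_1_2_def
      by (intro log_ratio_tendsto_if_ln_ratio_0) auto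
  qed
qed

lemma eventually_community_size:
  assumes "assumption_1_1 p r \<or> assumption_1_2 p r"
  shows "\<forall>\<^sub>F n in sequentially. 2 \<le> r n \<and> r n < n"
  using eventually_pbar_pos[OF assms] log_ratio_tendsto[OF assms, unfolded filterlim_at_top_dense, rule_format, of 0]
proof eventually_elim
  case (elim n)
  then have "r n < n"
    by (simp add: ln_ratio_pos_iff)
  then have "0 < pbar p n {1..r n}"
    using elim(1) by simp
  then have "\<not> card {1..r n} \<le> 1"
    using pbar_eq_0_if_card_le_1 by (metis less_irrefl)
  then show ?case
    using \<open>r n < n\<close> by simp
qed

context planted_model
begin

definition above_boundary :: "real \<Rightarrow> bool" where
  "above_boundary \<epsilon> \<longleftrightarrow> (\<forall>\<^sub>F n in sequentially. \<forall>C. C \<subseteq> {1..n} \<and> card C = r n \<longrightarrow>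
     (\<exists>D. D \<subseteq> C \<and> D \<noteq> {} \<and>
        mean_edges p n D * hfun (\<rho> n C - 1) / (real (card D) * ln (real n / real (card D))) \<ge> 1 + \<epsilon>))"

lemma ln_rho_mult_ln_2_le:
  assumes C: "C \<subseteq> {1..n}" "card C = r n" and "2 \<le> r n" "0 < pbar p n C"
    and "ln (1 / pbar p n C) * ln (real (r n)) \<le> B"
  shows "ln (\<rho> n C) * ln 2 \<le> B"
proof -
  have "0 < ln (\<rho> n C)"
    using rho_gt[OF C] by simp
  moreover have "ln (\<rho> n C) \<le> ln (1 / pbar p n C)"
    using ln_rho_le_ln_inv_pbar[OF C assms(3,4)] .
  moreover have "ln 2 \<le> ln (real (r n))"
    using assms(3) by simp
  ultimately have "ln (\<rho> n C) * ln 2 \<le> ln (1 / pbar p n C) * ln (real (r n))"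
    by (intro mult_mono) auto
  then show ?thesis
    using assms(5) by linarith
qed

lemma eventually_detectable_1_2:
  assumes "assumption_1_2 p r" "above_boundary \<epsilon>" "0 < M"
    and size: "\<forall>\<^sub>F n in sequentially. 2 \<le> r n \<and> r n < n"
    and log_ratio: "filterlim (\<lambda>n. ln (real n / real (r n))) at_top sequentially"
  shows "\<forall>\<^sub>F n in sequentially. \<forall>C. C \<subseteq> {1..n} \<and> card C = r n \<longrightarrow> (\<exists>D. detectable \<epsilon> M n C D)"
proof -
  define c where "c = ln 2 / (2 * M)"
  have "0 < c"
    using assms(3) by (simp add: c_def)
  from assumption_1_2_sparse[OF assms(1) this] size log_ratio[unfolded filterlim_at_top, rule_format, of "2 * M"]
    assms(2)[unfolded above_boundary_def]
  show ?thesis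
  proof eventually_elim
    case (elim n)
    show ?case
    proof (intro allI impI)
      fix C
      assume C: "C \<subseteq> {1..n} \<and> card C = r n"
      then obtain D where D: "D \<subseteq> C" "D \<noteq> {}"
        "1 + \<epsilon> \<le> mean_edges p n D * hfun (\<rho> n C - 1) / (real (card D) * ln (real n / real (card D)))"
        using elim(4) by blast
      have "ln (\<rho> n C) * ln 2 \<le> c * ln (real n / real (r n))"
        using elim(1,2) C by (intro ln_rho_mult_ln_2_le) auto
      then have "M * ln (\<rho> n C) \<le> ln (real n / real (r n)) / 2"
        using assms(3) by (simp add: c_def field_simps)
      then have "M * (1 + ln (\<rho> n C)) \<le> ln (real n / real (r n))"
        using elim(3) by (simp add: distrib_left)
      then show "\<exists>D. detectable \<epsilon> M n C D"
        using detectable_if_log_ratio_ge[OF _ _ _ D] C elim(2) by blast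
    qed
  qed
qed

lemma dense_signal:
  assumes "card C = m" "2 \<le> m" "1 \<le> hfun z" "0 \<le> pbar p n C"
    and "4 * (1 + \<epsilon>) * ln (real n / real m) \<le> real m * pbar p n C"
  shows "(1 + \<epsilon>) * scan_norm n C \<le> mean_edges p n C * hfun z"
proof -
  have "(1 + \<epsilon>) * scan_norm n C = real m / 4 * (4 * (1 + \<epsilon>) * ln (real n / real m))"
    by (simp add: scan_norm_def assms(1))
  also have "\<dots> \<le> real m / 4 * (real m * pbar p n C)"
    using assms(5) by (intro mult_left_mono) auto
  also have "\<dots> = pbar p n C * (real m / 2)\<^sup>2"
    by (simp add: power2_eq_square)
  also have "\<dots> \<le> pbar p n C * real (m choose 2)"
    using binomial_ge_n_over_k_pow_k[of 2 m, where 'a = real] assms(2,4) by (intro mult_left_mono) auto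
  also have "\<dots> = mean_edges p n C"
    using assms(1,2) by (simp add: pbar_def)
  also have "\<dots> \<le> mean_edges p n C * hfun z"
    using assms(3) mean_edges_nonneg[of n C] by (simp add: mult_le_cancel_left1)
  finally show ?thesis .
qed

lemma community_detectable:
  assumes C: "C \<subseteq> {1..n}" "card C = r n" and "2 \<le> r n" "exp 1 \<le> \<rho> n C" "0 < pbar p n C"
    and dense: "4 * (1 + \<epsilon>) * ln (real n / real (r n)) \<le> real (r n) * pbar p n C"
    and "1 \<le> ln (real n / real (r n))" "M \<le> ln (real n / real (r n))" "0 < \<epsilon>" "0 \<le> M"
  shows "detectable \<epsilon> M n C C"
proof -
  define L where "L = ln (real n / real (r n))"
  have "1 \<le> hfun (\<rho> n C - 1)"
    using hfun_mono[of "exp 1 - 1" "\<rho> n C - 1"] assms(4) by (simp add: hfun_e_minus_1)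
  then have signal: "(1 + \<epsilon>) * scan_norm n C \<le> mean_edges p n C * hfun (\<rho> n C - 1)"
    using dense_signal[OF C(2) assms(3) _ _ dense] assms(5) by simp
  have "1 \<le> L" "4 * (1 + \<epsilon>) * L \<le> real (r n) * pbar p n C"
    using assms(7) dense by (simp_all add: L_def)
  moreover have "L \<le> 4 * (1 + \<epsilon>) * L"
    using \<open>1 \<le> L\<close> assms(9) mult_right_mono[of 1 "4 * (1 + \<epsilon>)" L] by simp
  ultimately have "1 \<le> real (r n) * pbar p n C"
    by linarith
  then have "1 / pbar p n C \<le> real (r n)"
    using assms(5) by (simp add: divide_le_eq mult.commute)
  then have "ln (1 / pbar p n C) \<le> ln (real (r n))"
    using assms(5) by (intro ln_mono) auto
  then have "ln (\<rho> n C) \<le> ln (real (r n))"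
    using ln_rho_le_ln_inv_pbar[OF C assms(3,5)] by linarith
  also have "\<dots> \<le> real (r n) - 1"
    using assms(3) by (intro ln_le_minus_one) auto
  finally have "M * (1 + ln (\<rho> n C)) \<le> M * real (r n)"
    using assms(10) by (intro mult_left_mono) auto
  also have "\<dots> \<le> L * real (r n)"
    using assms(8) by (intro mult_right_mono) (auto simp: L_def)
  finally have "M * (1 + ln (\<rho> n C)) \<le> L * real (r n)" .
  moreover have "C \<noteq> {}"
    using C(2) assms(3) by auto
  ultimately show ?thesis
    using signal C(2) by (simp add: detectable_def scan_norm_def L_def mult.commute)
qed

lemma eventually_detectable_1_1:
  assumes "assumption_1_1 p r" "above_boundary \<epsilon>" "0 < \<epsilon>" "0 < M"
    and size: "\<forall>\<^sub>F n in sequentially. 2 \<le> r n \<and> r n < n"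
    and log_ratio: "filterlim (\<lambda>n. ln (real n / real (r n))) at_top sequentially"
  shows "\<forall>\<^sub>F n in sequentially. \<forall>C. C \<subseteq> {1..n} \<and> card C = r n \<longrightarrow> (\<exists>D. detectable \<epsilon> M n C D)"
proof -
  have "0 < 1 / (4 * (1 + \<epsilon>))"
    using assms(3) by simp
  from assumption_1_1_dense[OF assms(1) this] size log_ratio[unfolded filterlim_at_top, rule_format, of "2 * M + 1"]
    assms(2)[unfolded above_boundary_def]
  show ?thesis
  proof eventually_elim
    case (elim n)
    show ?case
    proof (intro allI impI)
      fix C
      assume C: "C \<subseteq> {1..n} \<and> card C = r n"
      show "\<exists>D. detectable \<epsilon> M n C D"
      proof (cases "\<rho> n C \<le> exp 1")
        case True
        obtain D where D: "D \<subseteq> C" "D \<noteq> {}"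
          "1 + \<epsilon> \<le> mean_edges p n D * hfun (\<rho> n C - 1) / (real (card D) * ln (real n / real (card D)))"
          using elim(4) C by blast
        have "ln (\<rho> n C) \<le> 1"
          using True rho_gt C by (metis exp_gt_zero ln_exp ln_le_cancel_iff less_trans zero_less_one)
        then have "M * (1 + ln (\<rho> n C)) \<le> 2 * M"
          using assms(4) mult_left_mono[of "1 + ln (\<rho> n C)" 2 M] by simp
        then have "M * (1 + ln (\<rho> n C)) \<le> ln (real n / real (r n))"
          using elim(3) by linarith
        then show ?thesis
          using detectable_if_log_ratio_ge[OF _ _ _ D] C elim(2) by blast
      next
        case False
        have "0 < pbar p n C" "4 * (1 + \<epsilon>) * ln (real n / real (r n)) \<le> real (r n) * pbar p n C"
          using elim(1) C assms(3) by (auto simp: field_simps)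
        then show ?thesis
          using community_detectable[of C n \<epsilon> M] C False elim(2,3) assms(3,4) by auto
      qed
    qed
  qed
qed

lemma eventually_type_II_error_le:
  assumes "assumption_1_1 p r \<or> assumption_1_2 p r" "above_boundary \<epsilon>" "0 < \<epsilon>" "0 < e"
  shows "\<forall>\<^sub>F n in sequentially. \<forall>C. C \<subseteq> {1..n} \<and> card C = r n \<longrightarrow>
    graph_prob n (alt_q p \<rho> n C) (\<lambda>G. \<not> scan_test p r \<epsilon> n G) \<le> e"
proof -
  define \<kappa> where "\<kappa> = \<epsilon>\<^sup>2 / (16 * (1 + \<epsilon>))"
  define M where "M = (\<bar>ln e\<bar> + 1) / \<kappa>"
  have "0 < \<kappa>"
    using assms(3) by (simp add: \<kappa>_def)
  then have "0 < M" "\<kappa> * M = \<bar>ln e\<bar> + 1"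
    by (simp_all add: M_def)
  then have "exp (- (\<kappa> * M)) \<le> e"
    using assms(4) by (metis abs_ge_minus_self exp_le_cancel_iff exp_ln le_add_same_cancel1 minus_le_iff
        order.trans zero_le_one)
  have size: "\<forall>\<^sub>F n in sequentially. 2 \<le> r n \<and> r n < n"
    by (rule eventually_community_size[OF assms(1)])
  have "\<forall>\<^sub>F n in sequentially. \<forall>C. C \<subseteq> {1..n} \<and> card C = r n \<longrightarrow> (\<exists>D. detectable \<epsilon> M n C D)"
    using assms(1) eventually_detectable_1_1[OF _ assms(2,3) \<open>0 < M\<close> size log_ratio_tendsto[OF assms(1)]]
      eventually_detectable_1_2[OF _ assms(2) \<open>0 < M\<close> size log_ratio_tendsto[OF assms(1)]] by blast
  with size show ?thesis
  proof eventually_elim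
    case (elim n)
    show ?case
    proof (intro allI impI)
      fix C
      assume C: "C \<subseteq> {1..n} \<and> card C = r n"
      then obtain D where "detectable \<epsilon> M n C D"
        using elim(2) by blast
      then have "graph_prob n (alt_q p \<rho> n C) (\<lambda>G. \<not> scan_test p r \<epsilon> n G) \<le> exp (- (\<kappa> * M))"
        unfolding \<kappa>_def using type_II_error_le_if_detectable C elim(1) assms(3) \<open>0 < M\<close> by auto
      then show "graph_prob n (alt_q p \<rho> n C) (\<lambda>G. \<not> scan_test p r \<epsilon> n G) \<le> e"
        using \<open>exp (- (\<kappa> * M)) \<le> e\<close> by linarith
    qed
  qed
qed


lemma worst_type_II_error_tendsto_0:
  assumes "assumption_1_1 p r \<or> assumption_1_2 p r" "above_boundary \<epsilon>" "0 < \<epsilon>"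
  shows "(\<lambda>n. Max ((\<lambda>C. graph_prob n (alt_q p \<rho> n C) (\<lambda>G. \<not> scan_test p r \<epsilon> n G))
    ` {C. C \<subseteq> {1..n} \<and> card C = r n})) \<longlonglongrightarrow> 0"
proof (rule Max_image_tendsto_0)
  show "finite {C. C \<subseteq> {1..n} \<and> card C = r n}" for n
    by (rule finite_subset[of _ "Pow {1..n}"]) auto
  show "\<forall>\<^sub>F n in sequentially. {C. C \<subseteq> {1..n} \<and> card C = r n} \<noteq> {}"
    using eventually_community_size[OF assms(1)] by (rule eventually_mono) (auto intro!: exI[of _ "{1..r _}"])
  show "\<forall>\<^sub>F n in sequentially. \<forall>C\<in>{C. C \<subseteq> {1..n} \<and> card C = r n}.
      0 \<le> graph_prob n (alt_q p \<rho> n C) (\<lambda>G. \<not> scan_test p r \<epsilon> n G)"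
    using bernoulli_family.prob_nonneg[OF bernoulli_family_alt] by (simp add: graph_prob_eq_bernoulli_prob)
  show "\<forall>\<^sub>F n in sequentially. \<forall>C\<in>{C. C \<subseteq> {1..n} \<and> card C = r n}.
      graph_prob n (alt_q p \<rho> n C) (\<lambda>G. \<not> scan_test p r \<epsilon> n G) \<le> e" if "0 < e" for e
    using eventually_type_II_error_le[OF assms that] by simp
qed
end

theorem corollary1:
  fixes p :: "nat \<Rightarrow> nat \<Rightarrow> nat \<Rightarrow> real"
    and \<rho> :: "nat \<Rightarrow> nat set \<Rightarrow> real"
    and r :: "nat \<Rightarrow> nat"
    and \<epsilon> :: real
  assumes p_sym: "\<And>n i j. i \<noteq> j \<Longrightarrow> p n i j = p n j i"
    and p_range: "\<And>n i j. i \<noteq> j \<Longrightarrow> 0 \<le> p n i j \<and> p n i j \<le> 1"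
    and rho_gt: "\<And>n C. C \<subseteq> {1..n} \<Longrightarrow> card C = r n \<Longrightarrow> \<rho> n C > 1"
    and rho_le: "\<And>n C i j. C \<subseteq> {1..n} \<Longrightarrow> card C = r n \<Longrightarrow> i \<in> C \<Longrightarrow> j \<in> C \<Longrightarrow> i \<noteq> j
                  \<Longrightarrow> \<rho> n C * p n i j \<le> 1"
    and assm: "assumption_1_1 p r \<or> assumption_1_2 p r"
    and eps: "\<epsilon> > 0"
    and signal: "\<forall>\<^sub>F n in sequentially. \<forall>C. C \<subseteq> {1..n} \<and> card C = r n \<longrightarrow>
                   (\<exists>D. D \<subseteq> C \<and> D \<noteq> {} \<and>
                      mean_edges p n D * hfun (\<rho> n C - 1) / (real (card D) * ln (real n / real (card D)))
                        \<ge> 1 + \<epsilon>)"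
  shows "asymp_powerful p \<rho> r (scan_test p r \<epsilon>)"
proof -
  interpret planted_model p \<rho> r
    using p_range rho_gt rho_le by unfold_locales auto
  have "above_boundary \<epsilon>"
    using signal by (simp add: above_boundary_def)
  show ?thesis
    unfolding asymp_powerful_def risk_def setcompr_eq_image
    using tendsto_add[OF type_I_error_tendsto_0[OF eps log_ratio_tendsto[OF assm]]
        worst_type_II_error_tendsto_0[OF assm \<open>above_boundary \<epsilon>\<close> eps]]
    by simp
qed

end
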